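(* There are infinitely many coprime pairs $(r,s)$ of integers $r,s\geq2$ such that $2c_{r,s}=c_{p,q}$ for some coprime integers $p,q\geq2$; that is, infinitely many of the rational vertex algebras $(\mathcal{L}_{c_{r,s}}^{\otimes 2})^{S_2}$ have a minimal (Virasoro) central charge. Likewise, there are infinitely many coprime pairs $(r,s)$, $r,s\ge2$, such that $3c_{r,s}=c_{p,q}$ for some coprime integers $p,q\geq 2$; that is, infinitely many of the vertex algebras $(\mathcal{L}_{c_{r,s}}^{\otimes 3})^{\mathbb{Z}_3}$ have a minimal central charge.
   Context: For coprime integers $p,q\geq2$, $c_{p,q}=1-\frac{6(p-q)^2}{pq}$ (a minimal central charge). $\mathcal{L}_c$ is the simple Virasoro vertex operator algebra of central charge $c$; $(\mathcal{L}_c^{\otimes 2})^{S_2}$ and $(\mathcal{L}_c^{\otimes 3})^{\mathbb{Z}_3}$ are the fixed-point subalgebras under permutation of tensor factors (resp. cyclic permutation), with central charges $2c$ and $3c$. *)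

theory Defs
  imports Complex_Main
begin

definition cmin :: "int \<Rightarrow> int \<Rightarrow> rat" where
  "cmin p q = 1 - of_int (6 * (p - q)^2) / of_int (p * q)"

definition minpair :: "int \<Rightarrow> int \<Rightarrow> bool" where
  "minpair p q \<longleftrightarrow> p \<ge> 2 \<and> q \<ge> 2 \<and> coprime p q"

end

theory Submission
  imports Defs
begin

text \<open>
  For u = r/s one has c_{r,s} = 13 - 6 (u + 1/u), so k c_{r,s} = c_{p,q} with v = p/q is a quadratic
  equation for v over Q(u); it has a rational root exactly when a quartic in u is a rational square.
  For k = 2 and k = 3 this quartic curve has a rational point (u = 4/3, resp. u = 3/2), and moving it
  to infinity turns the curve into an integral Weierstrass cubic. On each cubic the tangent
  construction, started at a point whose x-coordinate has 4 in its denominator, strictly increases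
  the power of 2 in the denominator, so there are infinitely many rational points; a chord argument
  then makes their x-coordinates unbounded. Large x means u close to 4/3 (resp. 3/2), which keeps
  r, s, p, q at least 2 and forces the denominator s of u to be large, giving infinitely many pairs.
\<close>

section \<open>Weierstrass cubics\<close>

definition weier :: "'a::comm_ring_1 \<Rightarrow> 'a \<Rightarrow> 'a \<Rightarrow> 'a \<Rightarrow> 'a" where
  "weier a b c x = x^3 + a*x^2 + b*x + c"

definition weier_divdiff :: "'a::comm_ring_1 \<Rightarrow> 'a \<Rightarrow> 'a \<Rightarrow> 'a \<Rightarrow> 'a" where
  "weier_divdiff a b x1 x2 = x1^2 + x1*x2 + x2^2 + a*(x1 + x2) + b"

lemma weier_diff: "weier a b c x1 - weier a b c x2 = (x1 - x2) * weier_divdiff a b x1 x2"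
  unfolding weier_def weier_divdiff_def by (simp add: power2_eq_square power3_eq_cube algebra_simps)

text \<open>In the chord and tangent constructions the auxiliary function D is affine in x, because
  the third intersection x3 is chosen to cancel the quadratic terms; so it vanishes identically
  once it vanishes at two points, resp. at one point with zero slope.\<close>

lemma weier_chord:
  fixes x1 x2 y1 y2 :: "'a::field"
  assumes P1: "y1^2 = weier a b c x1" and P2: "y2^2 = weier a b c x2" and "x1 \<noteq> x2"
  defines "s \<equiv> (y1 - y2) / (x1 - x2)"
  defines "x3 \<equiv> s^2 - a - x1 - x2"
  shows "(s * (x1 - x3) - y1)^2 = weier a b c x3"
proof -
  define D where "D x = weier a b c x - (y1 + s*(x - x1))^2 - (x - x1)*(x - x2)*(x - x3)" for x
  have affine: "D x3 * (x1 - x2) = D x1 * (x3 - x2) - D x2 * (x3 - x1)"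
    unfolding D_def weier_def x3_def by algebra
  have "s * (x1 - x2) = y1 - y2"
    using \<open>x1 \<noteq> x2\<close> unfolding s_def by simp
  then have "y1 + s*(x2 - x1) = y2"
    by (simp add: algebra_simps)
  then have "D x1 = 0" "D x2 = 0"
    unfolding D_def using P1 P2 by simp_all
  then have "D x3 = 0"
    using affine \<open>x1 \<noteq> x2\<close> by simp
  then have "weier a b c x3 = (y1 + s*(x3 - x1))^2"
    unfolding D_def by simp
  also have "\<dots> = (s*(x1 - x3) - y1)^2"
    by (simp add: power2_eq_square algebra_simps)
  finally show ?thesis ..
qed

lemma weier_tangent:
  fixes x1 y1 :: "'a::field_char_0"
  assumes P1: "y1^2 = weier a b c x1" and "y1 \<noteq> 0"
  defines "s \<equiv> (3*x1^2 + 2*a*x1 + b) / (2*y1)"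
  defines "x3 \<equiv> s^2 - a - 2*x1"
  shows "(s * (x1 - x3) - y1)^2 = weier a b c x3"
proof -
  define D where "D x = weier a b c x - (y1 + s*(x - x1))^2 - (x - x1)^2*(x - x3)" for x
  have affine: "D x3 = D x1 + (x3 - x1) * ((3*x1^2 + 2*a*x1 + b) - 2*s*y1)"
    unfolding D_def weier_def x3_def
    by (simp add: power2_eq_square power3_eq_cube algebra_simps)
  have "2*s*y1 = 3*x1^2 + 2*a*x1 + b"
    using \<open>y1 \<noteq> 0\<close> unfolding s_def by simp
  moreover have "D x1 = 0"
    unfolding D_def using P1 by simp
  ultimately have "D x3 = 0"
    using affine by simp
  then have "weier a b c x3 = (y1 + s*(x3 - x1))^2"
    unfolding D_def by simp
  also have "\<dots> = (s*(x1 - x3) - y1)^2"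
    by (simp add: power2_eq_square algebra_simps)
  finally show ?thesis ..
qed

definition weier_dup_num :: "'a::comm_ring_1 \<Rightarrow> 'a \<Rightarrow> 'a \<Rightarrow> 'a \<Rightarrow> 'a" where
  "weier_dup_num a b c x = x^4 - 2*b*x^2 - 8*c*x + b^2 - 4*a*c"

lemma weier_tangent_x:
  fixes x y :: "'a::field_char_0"
  assumes P: "y^2 = weier a b c x" and "y \<noteq> 0"
  shows "((3*x^2 + 2*a*x + b) / (2*y))^2 - a - 2*x = weier_dup_num a b c x / (4 * weier a b c x)"
proof -
  have f0: "weier a b c x \<noteq> 0"
    using \<open>y \<noteq> 0\<close> by (simp flip: P)
  have "((3*x^2 + 2*a*x + b) / (2*y))^2 = (3*x^2 + 2*a*x + b)^2 / (4 * weier a b c x)"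
    using P by (simp add: power_divide power_mult_distrib)
  also have "(3*x^2 + 2*a*x + b)^2 = weier_dup_num a b c x + 4*(a + 2*x) * weier a b c x"
    unfolding weier_dup_num_def weier_def
    by (simp add: power2_eq_square power3_eq_cube power4_eq_xxxx algebra_simps)
  finally show ?thesis
    using f0 by (simp add: field_simps)
qed

text \<open>The inverse of the classical birational map from the quartic
  w^2 = (d t^2 + \<alpha> t + \<beta>)^2 + \<gamma> t + \<delta> to a Weierstrass cubic.\<close>

lemma quartic_point_of_cubic_point:
  fixes d \<alpha> \<beta> \<gamma> \<delta> m Z :: "'a::field_char_0"
  assumes cubic: "Z^2 = 8*d*m^3 + (4*\<alpha>^2 - 16*d*\<beta>)*m^2 + (4*\<alpha>*\<gamma> - 8*d*\<delta>)*m + \<gamma>^2"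
    and "m \<noteq> 0" and "d \<noteq> 0"
  defines "t \<equiv> (Z - 2*\<alpha>*m - \<gamma>) / (4*d*m)"
  shows "2*d*m*t^2 + (2*\<alpha>*m + \<gamma>)*t = m^2 - 2*\<beta>*m - \<delta>"
    and "(m - (d*t^2 + \<alpha>*t + \<beta>))^2 = (d*t^2 + \<alpha>*t + \<beta>)^2 + \<gamma>*t + \<delta>"
proof -
  have Z: "Z = 4*d*m*t + 2*\<alpha>*m + \<gamma>"
    unfolding t_def using \<open>m \<noteq> 0\<close> \<open>d \<noteq> 0\<close> by (simp add: field_simps)
  have "8*d*m * (2*d*m*t^2 + (2*\<alpha>*m + \<gamma>)*t) = Z^2 - (4*\<alpha>^2*m^2 + 4*\<alpha>*\<gamma>*m + \<gamma>^2)"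
    unfolding Z by (simp add: power2_eq_square algebra_simps)
  also have "\<dots> = 8*d*m * (m^2 - 2*\<beta>*m - \<delta>)"
    unfolding cubic by (simp add: power2_eq_square power3_eq_cube algebra_simps)
  finally show rel: "2*d*m*t^2 + (2*\<alpha>*m + \<gamma>)*t = m^2 - 2*\<beta>*m - \<delta>"
    using \<open>m \<noteq> 0\<close> \<open>d \<noteq> 0\<close> by simp
  have "(m - (d*t^2 + \<alpha>*t + \<beta>))^2 = (d*t^2 + \<alpha>*t + \<beta>)^2 + (m^2 - 2*m*(d*t^2 + \<alpha>*t + \<beta>))"
    by (simp add: power2_eq_square algebra_simps)
  also have "m^2 - 2*m*(d*t^2 + \<alpha>*t + \<beta>) = \<gamma>*t + \<delta>"
    using rel by (simp add: power2_eq_square algebra_simps)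
  finally show "(m - (d*t^2 + \<alpha>*t + \<beta>))^2 = (d*t^2 + \<alpha>*t + \<beta>)^2 + \<gamma>*t + \<delta>"
    by simp
qed

section \<open>Points with a pole at 2\<close>

definition two_adic_pole :: "nat \<Rightarrow> rat \<Rightarrow> bool" where
  "two_adic_pole j x \<longleftrightarrow> (\<exists>A B :: int. odd A \<and> odd B \<and> x = of_int A / (4^j * of_int B))"

lemma two_adic_pole_unique:
  assumes "two_adic_pole j x" and "two_adic_pole k x"
  shows "j = k"
proof -
  have no_cross: False
    if "i < l" "odd C" "odd E" "odd C'" "odd E'" "C * 4^l * E' = C' * 4^i * E" for i l and C E C' E' :: int
  proof -
    have "(4::int)^l = 4^i * 4^(l - i)"
      using \<open>i < l\<close> by (simp flip: power_add)
    with that(6) have "C * 4^(l - i) * E' = C' * E"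
      by (simp add: algebra_simps)
    moreover have "even (C * 4^(l - i) * E')"
      using \<open>i < l\<close> by simp
    ultimately show False
      using that(2-5) by simp
  qed
  obtain A B where AB: "odd A" "odd B" "x = of_int A / (4^j * of_int B)"
    using assms(1) two_adic_pole_def by auto
  obtain A' B' where AB': "odd A'" "odd B'" "x = of_int A' / (4^k * of_int B')"
    using assms(2) two_adic_pole_def by auto
  have "of_int B \<noteq> (0::rat)" "of_int B' \<noteq> (0::rat)"
    using AB(2) AB'(2) by auto
  then have "(of_int A :: rat) * (4^k * of_int B') = of_int A' * (4^j * of_int B)"
    using AB(3) AB'(3) by (simp add: field_simps)
  then have "of_int (A * 4^k * B') = (of_int (A' * 4^j * B) :: rat)"
    by (simp add: algebra_simps)
  then have "A * 4^k * B' = A' * 4^j * B"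
    by (simp only: of_int_eq_iff)
  then show "j = k"
    using no_cross[of j k A B A' B'] no_cross[of k j A' B' A B] AB AB'
    by (metis linorder_neqE_nat)
qed

text \<open>With x = A/D, D = 4^j B even and A odd, both D^3 f(x) and D^4 N(x) are odd integers.\<close>

lemma two_adic_pole_dup:
  fixes a b c :: int
  assumes "two_adic_pole j x" and "1 \<le> j"
  shows "weier (of_int a) (of_int b) (of_int c) x \<noteq> 0"
    and "two_adic_pole (Suc j)
           (weier_dup_num (of_int a) (of_int b) (of_int c) x / (4 * weier (of_int a) (of_int b) (of_int c) x))"
proof -
  obtain A B where AB: "odd A" "odd B" "x = of_int A / (4^j * of_int B)"
    using assms(1) two_adic_pole_def by auto
  define D :: int where "D = 4^j * B"
  have "even D"
    using \<open>1 \<le> j\<close> unfolding D_def by (cases j) auto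
  have D0: "(of_int D :: rat) \<noteq> 0"
    using AB(2) unfolding D_def by auto
  have x: "x = of_int A / of_int D"
    using AB(3) unfolding D_def by simp
  define F :: int where "F = A^3 + D * (a*A^2 + b*A*D + c*D^2)"
  define N :: int where "N = A^4 + D * (- 2*b*A^2*D - 8*c*A*D^2 + (b^2 - 4*a*c)*D^3)"
  have "odd F" "odd N"
    using \<open>even D\<close> AB(1) unfolding F_def N_def by simp_all
  have f: "weier (of_int a) (of_int b) (of_int c) x = of_int F / of_int D ^ 3"
    unfolding x weier_def F_def using D0
    by (simp add: field_simps power2_eq_square power3_eq_cube)
  have n: "weier_dup_num (of_int a) (of_int b) (of_int c) x = of_int N / of_int D ^ 4"
    unfolding x weier_dup_num_def N_def using D0
    by (simp add: field_simps power2_eq_square power3_eq_cube power4_eq_xxxx)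
  have F0: "(of_int F :: rat) \<noteq> 0"
    using \<open>odd F\<close> by auto
  then show "weier (of_int a) (of_int b) (of_int c) x \<noteq> 0"
    using D0 f by simp
  have "of_int N / of_int D ^ 4 / (4 * (of_int F / of_int D ^ 3)) = (of_int N :: rat) / (4 * of_int D * of_int F)"
    using D0 F0 by (simp add: field_simps power3_eq_cube power4_eq_xxxx)
  also have "\<dots> = of_int N / (4^Suc j * of_int (B * F))"
    unfolding D_def by (simp add: algebra_simps)
  finally show "two_adic_pole (Suc j)
      (weier_dup_num (of_int a) (of_int b) (of_int c) x / (4 * weier (of_int a) (of_int b) (of_int c) x))"
    unfolding two_adic_pole_def f n using \<open>odd N\<close> \<open>odd F\<close> AB(2)
    by (intro exI[of _ N] exI[of _ "B * F"]) simp
qed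

lemma tangent_two_adic_pole:
  fixes a b c :: int
  assumes "y^2 = weier (of_int a) (of_int b) (of_int c) x" and "two_adic_pole j x" and "1 \<le> j"
  shows "\<exists>x' y'. y'^2 = weier (of_int a) (of_int b) (of_int c) x' \<and> two_adic_pole (Suc j) x'"
proof -
  have "y \<noteq> 0"
    using two_adic_pole_dup(1)[OF assms(2,3)] assms(1) by auto
  then show ?thesis
    using weier_tangent[OF assms(1)] weier_tangent_x[OF assms(1)] two_adic_pole_dup(2)[OF assms(2,3)]
    by metis
qed

lemma infinite_two_adic_points:
  fixes a b c :: int
  assumes "y0^2 = weier (of_int a) (of_int b) (of_int c) x0" and "two_adic_pole j0 x0" and "1 \<le> j0"
  shows "infinite {x. (\<exists>y. y^2 = weier (of_int a) (of_int b) (of_int c) x) \<and> (\<exists>j. two_adic_pole j x)}"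
    (is "infinite ?S")
proof -
  have "\<exists>x y. y^2 = weier (of_int a) (of_int b) (of_int c) x \<and> two_adic_pole (j0 + n) x" for n
  proof (induction n)
    case 0
    then show ?case using assms(1,2) by auto
  next
    case (Suc n)
    then show ?case using tangent_two_adic_pole \<open>1 \<le> j0\<close> by fastforce
  qed
  then obtain g where g: "\<And>n. (\<exists>y. y^2 = weier (of_int a) (of_int b) (of_int c) (g n)) \<and> two_adic_pole (j0 + n) (g n)"
    by metis
  have "inj g"
    by (rule injI) (metis g two_adic_pole_unique add_left_cancel)
  then have "infinite (range g)"
    using finite_imageD by blast
  moreover have "range g \<subseteq> ?S"
    using g by blast
  ultimately show ?thesis
    using finite_subset by blast
qed

section \<open>Unbounded x-coordinates\<close>

lemma infinite_bounded_close_points: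
  fixes T :: "'a::floor_ceiling set"
  assumes "infinite T" and "T \<subseteq> {L..M}" and "0 < \<delta>"
  shows "\<exists>x1\<in>T. \<exists>x2\<in>T. x1 \<noteq> x2 \<and> \<bar>x1 - x2\<bar> < \<delta>"
proof -
  let ?cell = "\<lambda>x. \<lfloor>x / \<delta>\<rfloor>"
  have "?cell ` T \<subseteq> {\<lfloor>L / \<delta>\<rfloor>..\<lfloor>M / \<delta>\<rfloor>}"
    using assms(2,3) by (force intro!: floor_mono divide_right_mono)
  then have "finite (?cell ` T)"
    by (rule finite_subset) simp
  then have "\<not> inj_on ?cell T"
    using \<open>infinite T\<close> finite_imageD by blast
  then obtain x1 x2 where x: "x1 \<in> T" "x2 \<in> T" "x1 \<noteq> x2" "?cell x1 = ?cell x2"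
    unfolding inj_on_def by blast
  then have "\<bar>x1 / \<delta> - x2 / \<delta>\<bar> < 1"
    using floor_correct[of "x1 / \<delta>"] floor_correct[of "x2 / \<delta>"] by simp linarith
  then have "\<bar>x1 - x2\<bar> < \<delta>"
    using \<open>0 < \<delta>\<close> by (simp add: field_simps flip: diff_divide_distrib)
  then show ?thesis
    using x by blast
qed

lemma abs_slope_lt_of_flat_chords:
  fixes x1 x2 y1 y2 K R :: "'a::linordered_field"
  assumes "x1 \<noteq> x2" and "0 < R" and diff: "y1^2 - y2^2 = (x1 - x2) * K"
    and plus: "(y1 + y2)^2 < R * (x1 - x2)^2" and minus: "(y1 - y2)^2 < R * (x1 - x2)^2"
  shows "\<bar>K\<bar> < R * \<bar>x1 - x2\<bar>"
proof -
  define \<Delta> where "\<Delta> = x1 - x2"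
  have "(y1 + y2) * (y1 - y2) = \<Delta> * K"
    using diff unfolding \<Delta>_def by (simp add: power2_eq_square algebra_simps)
  then have "\<Delta>^2 * K^2 = (y1 + y2)^2 * (y1 - y2)^2"
    by (simp flip: power_mult_distrib)
  also have "\<dots> < (R * \<Delta>^2) * (R * \<Delta>^2)"
    using plus minus unfolding \<Delta>_def
    by (intro mult_strict_mono) (auto intro: le_less_trans[OF zero_le_power2])
  also have "\<dots> = \<Delta>^2 * (R * \<bar>\<Delta>\<bar>)^2"
    by (simp add: power2_eq_square algebra_simps)
  finally have "\<Delta>^2 * K^2 < \<Delta>^2 * (R * \<bar>\<Delta>\<bar>)^2" .
  moreover have "0 < \<Delta>^2"
    using \<open>x1 \<noteq> x2\<close> unfolding \<Delta>_def by simp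
  ultimately have "K^2 < (R * \<bar>\<Delta>\<bar>)^2"
    by (rule mult_less_cancel_left_pos[THEN iffD1, rotated])
  then show ?thesis
    using power2_less_imp_less[of "\<bar>K\<bar>" "R * \<bar>\<Delta>\<bar>"] \<open>0 < R\<close> unfolding \<Delta>_def by simp
qed

text \<open>Of the chords joining (x1, y1) to (x2, y2) and to (x2, -y2), one is steep when x1 and x2 are
  close: either some |y| is at least \<eta>, or both are small and then the slope K of y^2 is at least \<kappa>.\<close>

lemma steep_chord:
  fixes x1 x2 y1 y2 K R \<delta> \<eta> \<kappa> :: "'a::linordered_field"
  assumes "x1 \<noteq> x2" and "\<bar>x1 - x2\<bar> < \<delta>" and "\<delta> \<le> 1" and "0 < R"
    and "0 \<le> \<eta>" and "R * \<delta> \<le> \<eta>^2" and "R * \<delta> \<le> \<kappa>"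
    and diff: "y1^2 - y2^2 = (x1 - x2) * K"
    and small: "\<bar>y1\<bar> < \<eta> \<Longrightarrow> \<bar>y2\<bar> < \<eta> \<Longrightarrow> \<kappa> \<le> K"
  shows "R * (x1 - x2)^2 \<le> (y1 + y2)^2 \<or> R * (x1 - x2)^2 \<le> (y1 - y2)^2"
proof (rule ccontr)
  assume "\<not> ?thesis"
  then have plus: "(y1 + y2)^2 < R * (x1 - x2)^2" and minus: "(y1 - y2)^2 < R * (x1 - x2)^2"
    by auto
  have "\<bar>x1 - x2\<bar> \<le> 1"
    using assms(2,3) by simp
  then have "(x1 - x2)^2 \<le> \<bar>x1 - x2\<bar>"
    by (metis abs_ge_zero abs_mult_self_eq mult_left_le power2_eq_square)
  then have R\<delta>: "R * (x1 - x2)^2 \<le> R * \<delta>"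
    using assms(2,4) by (simp add: mult_left_mono)
  show False
  proof (cases "\<bar>y1\<bar> < \<eta> \<and> \<bar>y2\<bar> < \<eta>")
    case True
    have "\<bar>K\<bar> < R * \<bar>x1 - x2\<bar>"
      using abs_slope_lt_of_flat_chords[OF \<open>x1 \<noteq> x2\<close> \<open>0 < R\<close> diff plus minus] .
    moreover have "R * \<bar>x1 - x2\<bar> \<le> R * \<delta>"
      using assms(2) \<open>0 < R\<close> by simp
    ultimately show False
      using small True \<open>R * \<delta> \<le> \<kappa>\<close> by linarith
  next
    case False
    moreover have "2 * \<bar>y1\<bar> \<le> \<bar>y1 + y2\<bar> + \<bar>y1 - y2\<bar>"
      using abs_triangle_ineq[of "y1 + y2" "y1 - y2"] by simp
    moreover have "2 * \<bar>y2\<bar> \<le> \<bar>y1 + y2\<bar> + \<bar>y1 - y2\<bar>"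
      using abs_triangle_ineq4[of "y1 + y2" "y1 - y2"] by simp
    ultimately have "\<eta> \<le> \<bar>y1 + y2\<bar> \<or> \<eta> \<le> \<bar>y1 - y2\<bar>"
      by linarith
    then have "\<eta>^2 \<le> (y1 + y2)^2 \<or> \<eta>^2 \<le> (y1 - y2)^2"
      using power_mono[of \<eta> _ 2] \<open>0 \<le> \<eta>\<close> by (metis power2_abs)
    then show False
      using plus minus R\<delta> \<open>R * \<delta> \<le> \<eta>^2\<close> by linarith
  qed
qed

lemma weier_steep_chord_beyond:
  fixes x1 x2 y1 y2 M :: "'a::linordered_field"
  assumes P1: "y1^2 = weier a b c x1" and P2: "y2^2 = weier a b c x2" and "x1 \<noteq> x2"
    and "x1 \<le> M" and "x2 \<le> M" and steep: "(3 * \<bar>M\<bar> + \<bar>a\<bar> + 1) * (x1 - x2)^2 \<le> (y1 - y2)^2"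
  shows "\<exists>x y. y^2 = weier a b c x \<and> M < x"
proof -
  define s where "s = (y1 - y2) / (x1 - x2)"
  define x3 where "x3 = s^2 - a - x1 - x2"
  have "(s * (x1 - x3) - y1)^2 = weier a b c x3"
    using weier_chord[OF P1 P2 \<open>x1 \<noteq> x2\<close>] unfolding s_def x3_def .
  moreover have "3 * \<bar>M\<bar> + \<bar>a\<bar> + 1 \<le> s^2"
    using steep \<open>x1 \<noteq> x2\<close> unfolding s_def by (simp add: power_divide pos_le_divide_eq)
  then have "M < x3"
    unfolding x3_def using \<open>x1 \<le> M\<close> \<open>x2 \<le> M\<close> abs_ge_self[of M] abs_ge_self[of a] by linarith
  ultimately show ?thesis
    by blast
qed

text \<open>A curve with infinitely many rational points whose x-coordinates are bounded would have
  two points with close x-coordinates; a steep chord through them has a third intersection point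
  further right than the bound.\<close>

lemma weier_points_unbounded:
  fixes a b c :: int and L \<eta> \<kappa> M :: rat
  defines "f \<equiv> weier (of_int a) (of_int b) (of_int c)"
  assumes P0: "y0^2 = f x0" and pole: "two_adic_pole j0 x0" and "1 \<le> j0"
    and lower: "\<And>x y. y^2 = f x \<Longrightarrow> L \<le> x"
    and small_values: "\<And>x1 x2. L \<le> x1 \<Longrightarrow> L \<le> x2 \<Longrightarrow> f x1 < \<eta>^2 \<Longrightarrow> f x2 < \<eta>^2 \<Longrightarrow>
          \<kappa> \<le> weier_divdiff (of_int a) (of_int b) x1 x2"
    and "0 < \<eta>" and "0 < \<kappa>"
  shows "\<exists>x y. y^2 = f x \<and> M < x"
proof (rule ccontr)
  assume "\<not> ?thesis"
  then have upper: "\<And>x y. y^2 = f x \<Longrightarrow> x \<le> M"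
    by (meson not_less)
  define T where "T = {x. (\<exists>y. y^2 = f x) \<and> (\<exists>j. two_adic_pole j x)}"
  have "infinite T"
    unfolding T_def f_def by (rule infinite_two_adic_points[OF P0[unfolded f_def] pole \<open>1 \<le> j0\<close>])
  moreover have "T \<subseteq> {L..M}"
    unfolding T_def using lower upper by auto
  define R :: rat where "R = 3 * \<bar>M\<bar> + \<bar>of_int a\<bar> + 1"
  have "0 < R"
    unfolding R_def by simp
  define \<delta> where "\<delta> = min 1 (min (\<eta>^2 / R) (\<kappa> / R))"
  have "0 < \<delta>" "\<delta> \<le> 1" "R * \<delta> \<le> \<eta>^2" "R * \<delta> \<le> \<kappa>"
    unfolding \<delta>_def using \<open>0 < R\<close> \<open>0 < \<eta>\<close> \<open>0 < \<kappa>\<close> by (auto simp: min_def field_simps)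
  obtain x1 x2 where "x1 \<in> T" "x2 \<in> T" "x1 \<noteq> x2" "\<bar>x1 - x2\<bar> < \<delta>"
    using infinite_bounded_close_points[OF \<open>infinite T\<close> \<open>T \<subseteq> {L..M}\<close> \<open>0 < \<delta>\<close>] by blast
  then obtain y1 y2 where P1: "y1^2 = f x1" and P2: "y2^2 = f x2"
    unfolding T_def by blast
  have small: "\<kappa> \<le> weier_divdiff (of_int a) (of_int b) x1 x2" if "\<bar>y1\<bar> < \<eta>" "\<bar>y2\<bar> < \<eta>"
  proof -
    have "f x1 < \<eta>^2" "f x2 < \<eta>^2"
      using that \<open>0 < \<eta>\<close> unfolding P1[symmetric] P2[symmetric] by (simp_all add: power2_strict_mono)
    then show ?thesis
      using small_values lower[OF P1] lower[OF P2] by blast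
  qed
  have "y1^2 - y2^2 = (x1 - x2) * weier_divdiff (of_int a) (of_int b) x1 x2"
    unfolding P1 P2 f_def by (rule weier_diff)
  then have "R * (x1 - x2)^2 \<le> (y1 + y2)^2 \<or> R * (x1 - x2)^2 \<le> (y1 - y2)^2"
    using \<open>0 < \<eta>\<close>
    by (intro steep_chord[OF \<open>x1 \<noteq> x2\<close> \<open>\<bar>x1 - x2\<bar> < \<delta>\<close> \<open>\<delta> \<le> 1\<close> \<open>0 < R\<close> _
        \<open>R * \<delta> \<le> \<eta>^2\<close> \<open>R * \<delta> \<le> \<kappa>\<close> _ small]) simp_all
  then obtain y2' where "y2'^2 = f x2" and "R * (x1 - x2)^2 \<le> (y1 - y2')^2"
    using P2 by (cases "R * (x1 - x2)^2 \<le> (y1 - y2)^2") (auto intro: that[of "- y2"] that[of y2])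
  moreover have "x1 \<le> M" "x2 \<le> M"
    using \<open>x1 \<in> T\<close> \<open>x2 \<in> T\<close> \<open>T \<subseteq> {L..M}\<close> by auto
  ultimately have "\<exists>x y. y^2 = f x \<and> M < x"
    using weier_steep_chord_beyond[OF P1[unfolded f_def] _ \<open>x1 \<noteq> x2\<close>] unfolding R_def f_def by blast
  then show False
    using upper not_le by blast
qed

lemma weier_divdiff_near_ge:
  fixes e x1 x2 :: "'a::linordered_field"
  assumes "e \<le> x1" and "x1 \<le> e + 1" and "e \<le> x2" and "x2 \<le> e + 1"
  shows "3*e^2 + 2*a*e + b - 2 * \<bar>3*e + a\<bar> \<le> weier_divdiff a b x1 x2"
proof -
  define e1 e2 where "e1 = x1 - e" and "e2 = x2 - e"
  define B where "B = 3*e + a"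
  have "0 \<le> e1" "e1 \<le> 1" "0 \<le> e2" "e2 \<le> 1"
    using assms unfolding e1_def e2_def by auto
  then have "\<bar>B\<bar> * (e1 + e2) \<le> \<bar>B\<bar> * 2" and "0 \<le> e1^2 + e1*e2 + e2^2"
    by (simp_all add: mult_left_mono)
  moreover have "- \<bar>B\<bar> * (e1 + e2) \<le> B * (e1 + e2)"
    using \<open>0 \<le> e1\<close> \<open>0 \<le> e2\<close> by (intro mult_right_mono) auto
  moreover have "weier_divdiff a b x1 x2 = 3*e^2 + 2*a*e + b + B * (e1 + e2) + (e1^2 + e1*e2 + e2^2)"
    unfolding weier_divdiff_def e1_def e2_def B_def by (simp add: power2_eq_square algebra_simps)
  ultimately show ?thesis
    unfolding B_def by linarith
qed

lemma weier_points_unbounded_of_root: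
  fixes a b c :: int and e M :: rat and h :: "rat \<Rightarrow> rat"
  defines "f \<equiv> weier (of_int a) (of_int b) (of_int c)"
  assumes P0: "y0^2 = f x0" and pole: "two_adic_pole j0 x0" and "1 \<le> j0"
    and factor: "\<And>x. f x = (x - e) * h x" and h_ge: "\<And>x. 1 \<le> h x"
    and slope: "1 \<le> 3*e^2 + 2*of_int a*e + of_int b - 2 * \<bar>3*e + of_int a\<bar>"
  shows "\<exists>x y. y^2 = f x \<and> M < x"
proof -
  have lower: "e \<le> x" if "y^2 = f x" for x y
  proof (rule ccontr)
    assume "\<not> e \<le> x"
    then have "f x < 0"
      using factor[of x] h_ge[of x] by (simp add: mult_neg_pos)
    then show False
      using that zero_le_power2[of y] by linarith
  qed
  have near: "x \<le> e + 1" if "e \<le> x" "f x < 1^2" for x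
  proof -
    have "x - e \<le> (x - e) * h x"
      using that(1) h_ge[of x] by (simp add: mult_le_cancel_left1)
    then show ?thesis
      using that factor[of x] by simp
  qed
  have small_values: "1 \<le> weier_divdiff (of_int a) (of_int b) x1 x2"
    if "e \<le> x1" "e \<le> x2" "f x1 < 1^2" "f x2 < 1^2" for x1 x2
    using weier_divdiff_near_ge[of e x1 x2 "of_int a" "of_int b"] that near[of x1] near[of x2] slope
    by linarith
  show ?thesis
    using weier_points_unbounded[of y0 a b c x0 j0 e 1 1 M, OF P0[unfolded f_def] pole \<open>1 \<le> j0\<close>
        lower[unfolded f_def] small_values[unfolded f_def]]
    unfolding f_def by simp
qed

section \<open>Central charges\<close>

lemma sum_inverse_bounds:
  fixes v :: "'a::linordered_field"
  assumes "2 < v + 1/v" and "v + 1/v < 5/2"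
  shows "1/2 < v" and "v < 2" and "v \<noteq> 1"
proof -
  have "0 < v"
  proof (rule ccontr)
    assume "\<not> 0 < v"
    then have "v + 1/v \<le> 0"
      by (simp add: add_nonpos_nonpos)
    then show False
      using assms(1) by simp
  qed
  have "(v - 2) * (2*v - 1) = v * (2 * (v + 1/v) - 5)"
    using \<open>0 < v\<close> by (simp add: field_simps)
  also have "\<dots> < 0"
    using \<open>0 < v\<close> assms(2) by (simp add: mult_pos_neg)
  finally have "(v - 2) * (2*v - 1) < 0" .
  then show "1/2 < v" and "v < 2"
    by (auto simp: mult_less_0_iff)
  show "v \<noteq> 1"
    using assms(1) by auto
qed

lemma sum_inverse_strict_mono:
  fixes x y :: "'a::linordered_field"
  assumes "1 \<le> x" and "x < y"
  shows "x + 1/x < y + 1/y"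
proof -
  have "0 < (y - x) * (x*y - 1) / (x*y)"
    using assms mult_le_less_imp_less[of 1 x 1 y] by (intro divide_pos_pos mult_pos_pos) auto
  also have "(y - x) * (x*y - 1) / (x*y) = (y + 1/y) - (x + 1/x)"
    using assms by (simp add: field_simps)
  finally show ?thesis
    by simp
qed

lemma cmin_quotient_of:
  assumes "quotient_of z = (r, s)" and "2 < z + 1/z" and "z + 1/z < 5/2"
  shows "minpair r s" and "cmin r s = 13 - 6 * (z + 1/z)"
proof -
  have z: "z = of_int r / of_int s" and "0 < s" and "coprime r s"
    using quotient_of_div quotient_of_denom_pos quotient_of_coprime assms(1) by blast+
  have "of_int s < 2 * (of_int r :: rat)" and "of_int r < 2 * (of_int s :: rat)" and "r \<noteq> s"
    using sum_inverse_bounds[OF assms(2,3)] \<open>0 < s\<close> unfolding z by (auto simp: field_simps)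
  then have "2 \<le> r" and "2 \<le> s"
    using \<open>0 < s\<close> by linarith+
  then show "minpair r s"
    unfolding minpair_def using \<open>coprime r s\<close> by simp
  show "cmin r s = 13 - 6 * (z + 1/z)"
    unfolding cmin_def z using \<open>2 \<le> r\<close> \<open>2 \<le> s\<close> by (simp add: field_simps power2_eq_square)
qed

definition charge_multiple_pairs :: "rat \<Rightarrow> (int \<times> int) set" where
  "charge_multiple_pairs k = {(r, s). minpair r s \<and> (\<exists>p q. minpair p q \<and> k * cmin r s = cmin p q)}"

text \<open>With X = u + 1/u, the condition k c(u) = c(v) reads v + 1/v = kX - 13(k-1)/6, i.e.
  6u v^2 - G v + 6u = 0 with G = 6u (kX - 13(k-1)/6); it has a rational root v exactly when its
  discriminant G^2 - 144u^2 is a rational square.\<close>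

lemma charge_multiple_pairsI:
  fixes u w k :: rat
  defines "X \<equiv> u + 1/u"
  assumes "quotient_of u = (r, s)" and "2 < X" and "X < 5/2"
    and "2 < k * X - 13 * (k - 1) / 6" and "k * X - 13 * (k - 1) / 6 < 5/2"
    and disc: "w^2 = (6*k*u^2 - 13*(k - 1)*u + 6*k)^2 - 144*u^2"
  shows "(r, s) \<in> charge_multiple_pairs k"
proof -
  define G where "G = 6*k*u^2 - 13*(k - 1)*u + 6*k"
  define v where "v = (G + w) / (12*u)"
  have "1/2 < u"
    using sum_inverse_bounds(1) assms(3,4) unfolding X_def by blast
  then have "0 < u"
    by simp
  have "6*u*v^2 - G*v + 6*u = (w^2 - G^2 + 144*u^2) / (24*u)"
    unfolding v_def using \<open>0 < u\<close> by (simp add: field_simps power2_eq_square)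
  then have root: "6*u*v^2 - G*v + 6*u = 0"
    using disc unfolding G_def by simp
  then have "v \<noteq> 0"
    using \<open>0 < u\<close> by auto
  then have "v + 1/v = G / (6*u)"
    using root \<open>0 < u\<close> by (simp add: field_simps power2_eq_square)
  also have "\<dots> = k * X - 13 * (k - 1) / 6"
    unfolding G_def X_def using \<open>0 < u\<close> by (simp add: field_simps power2_eq_square)
  finally have v: "v + 1/v = k * X - 13 * (k - 1) / 6" .
  obtain p q where pq: "quotient_of v = (p, q)"
    by (cases "quotient_of v")
  have "minpair p q" and cp: "cmin p q = 13 - 6 * (v + 1/v)"
    using cmin_quotient_of[OF pq] v assms(5,6) by simp_all
  moreover have "minpair r s" and cr: "cmin r s = 13 - 6 * X"
    using cmin_quotient_of[OF assms(2)] assms(3,4) unfolding X_def by simp_all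
  moreover have "k * cmin r s = cmin p q"
    unfolding cp cr v by (simp add: field_simps)
  ultimately show ?thesis
    unfolding charge_multiple_pairs_def by blast
qed

lemma quotient_of_dist_fraction:
  fixes u :: rat and a b :: int
  assumes "quotient_of u = (r, s)" and "0 < b" and "u \<noteq> of_int a / of_int b"
  shows "1 \<le> of_int (b * s) * \<bar>u - of_int a / of_int b\<bar>"
proof -
  have u: "u = of_int r / of_int s" and "0 < s"
    using quotient_of_div quotient_of_denom_pos assms(1) by blast+
  have "of_int (b * r) \<noteq> (of_int (a * s) :: rat)"
    using assms(3) \<open>0 < s\<close> \<open>0 < b\<close> unfolding u by (simp add: field_simps)
  then have "1 \<le> \<bar>b * r - a * s\<bar>"
    by (auto simp del: of_int_mult)
  then have "(1 :: rat) \<le> \<bar>of_int (b * r - a * s)\<bar>"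
    using of_int_le_iff[of 1 "\<bar>b * r - a * s\<bar>", where 'a = rat] by simp
  also have "of_int (b * r - a * s) = of_int (b * s) * (u - of_int a / of_int b)"
    unfolding u using \<open>0 < s\<close> \<open>0 < b\<close> by (simp add: field_simps)
  also have "\<bar>\<dots>\<bar> = of_int (b * s) * \<bar>u - of_int a / of_int b\<bar>"
    using \<open>0 < s\<close> \<open>0 < b\<close> by (simp add: abs_mult)
  finally show ?thesis .
qed

lemma infinite_if_snd_unbounded:
  fixes S :: "('a \<times> 'b::linorder) set"
  assumes "\<And>N. \<exists>x\<in>S. N < snd x"
  shows "infinite S"
proof
  assume "finite S"
  obtain x0 where "x0 \<in> S"
    using assms by blast
  define B where "B = Max (snd ` S)"
  obtain x where "x \<in> S" "B < snd x"
    using assms by blast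
  moreover have "snd x \<le> B"
    unfolding B_def using \<open>finite S\<close> \<open>x \<in> S\<close> by simp
  ultimately show False
    by simp
qed

section \<open>The case k = 2\<close>

text \<open>u = 4/3 is a root of the discriminant, so u = 4/3 + 1/t turns it into a cubic in t,
  which X = 224 t makes monic and integral.\<close>

abbreviation E2 :: "rat \<Rightarrow> rat" where
  "E2 \<equiv> weier 601 102144 7225344"

lemma E2_unbounded: "\<exists>x y. y^2 = E2 x \<and> M < x"
proof -
  define h :: "rat \<Rightarrow> rat" where "h x = (x + 217/2)^2 + 28175/4" for x
  have "(-165699495/85184)^2 = E2 (-527199/1936)"
    by (simp add: weier_def power_divide)
  moreover have "two_adic_pole 2 (-527199/1936)"
    unfolding two_adic_pole_def by (intro exI[of _ "-527199"] exI[of _ 121]) simp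
  moreover have "E2 x = (x - (-384)) * h x" for x
    unfolding weier_def h_def by (simp add: power2_eq_square power3_eq_cube algebra_simps)
  moreover have "1 \<le> h x" for x
    unfolding h_def using zero_le_power2[of "x + 217/2"] by linarith
  ultimately show ?thesis
    using weier_points_unbounded_of_root[of "-165699495/85184" 601 102144 7225344 "-527199/1936" 2 "-384" h M]
    by simp
qed

lemma E2_point_pair:
  assumes "Y^2 = E2 X" and "1344 < X"
  shows "\<exists>(r, s) \<in> charge_multiple_pairs 2. X / 672 \<le> of_int s"
proof -
  define t where "t = X / 224"
  define u where "u = 4/3 + 1/t"
  have "6 < t"
    unfolding t_def using assms(2) by simp
  have "(Y / (224 * t^2))^2 = E2 X / (224^2 * t^4)"
    using assms(1) by (simp add: power_divide power_mult_distrib flip: power_mult)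
  also have "E2 X = 224^2 * (224*t^3 + 601*t^2 + 456*t + 144)"
    unfolding t_def weier_def by (simp add: power2_eq_square power3_eq_cube algebra_simps)
  also have "\<dots> / (224^2 * t^4) = (224*t^3 + 601*t^2 + 456*t + 144) / t^4"
    by (rule mult_divide_mult_cancel_left) simp
  also have "\<dots> = (6*2*u^2 - 13*(2 - 1)*u + 6*2)^2 - 144*u^2"
    unfolding u_def using \<open>6 < t\<close> by (simp add: field_simps power2_eq_square power3_eq_cube power4_eq_xxxx)
  finally have disc: "(Y / (224 * t^2))^2 = (6*2*u^2 - 13*(2 - 1)*u + 6*2)^2 - 144*u^2" .
  have "4/3 < u" and "u < 3/2"
    unfolding u_def using \<open>6 < t\<close> by (simp_all add: field_simps)
  then have "4/3 + 1/(4/3) < u + 1/u" and "u + 1/u < 3/2 + 1/(3/2)"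
    by (simp_all only: sum_inverse_strict_mono)
  obtain r s where qu: "quotient_of u = (r, s)"
    by (cases "quotient_of u")
  have "(r, s) \<in> charge_multiple_pairs 2"
    by (rule charge_multiple_pairsI[OF qu _ _ _ _ disc])
      (use \<open>4/3 + 1/(4/3) < u + 1/u\<close> \<open>u + 1/u < 3/2 + 1/(3/2)\<close> in simp_all)
  moreover have "1 \<le> of_int (3 * s) * \<bar>u - of_int 4 / of_int 3\<bar>"
    using quotient_of_dist_fraction[OF qu, of 3 4] \<open>4/3 < u\<close> by simp
  then have "t \<le> 3 * of_int s"
    unfolding u_def using \<open>6 < t\<close> by (simp add: field_simps)
  then have "X / 672 \<le> of_int s"
    unfolding t_def by simp
  ultimately show ?thesis
    by blast
qed

lemma infinite_charge_multiple_pairs_2: "infinite (charge_multiple_pairs 2)"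
proof (rule infinite_if_snd_unbounded)
  fix N :: int
  obtain X Y where "Y^2 = E2 X" and "max 1344 (672 * of_int N) < X"
    using E2_unbounded by blast
  then obtain r s where "(r, s) \<in> charge_multiple_pairs 2" and "X / 672 \<le> of_int s"
    using E2_point_pair by fastforce
  moreover have "of_int N < X / 672"
    using \<open>max 1344 (672 * of_int N) < X\<close> by simp
  ultimately show "\<exists>x \<in> charge_multiple_pairs 2. N < snd x"
    by force
qed

section \<open>The case k = 3\<close>

lemma abs_ge_of_quadratic_bound:
  fixes m t T D E :: "'a::linordered_field"
  assumes "m^2 \<le> D*m*t^2 + E*m*\<bar>t\<bar>" and "0 \<le> D" and "0 \<le> E" and "1 \<le> T"
    and "(D + E) * T^2 < m"
  shows "T \<le> \<bar>t\<bar>"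
proof (rule ccontr)
  assume "\<not> T \<le> \<bar>t\<bar>"
  then have "\<bar>t\<bar> \<le> T"
    by simp
  have "0 \<le> (D + E) * T^2"
    using assms(2,3) by simp
  then have "0 < m"
    using assms(5) by linarith
  have "T \<le> T^2"
    using mult_left_mono[OF \<open>1 \<le> T\<close>, of T] \<open>1 \<le> T\<close> by (simp add: power2_eq_square)
  have "t^2 \<le> T^2"
    using power_mono[OF \<open>\<bar>t\<bar> \<le> T\<close>, of 2] by simp
  moreover have "\<bar>t\<bar> \<le> T^2"
    using \<open>\<bar>t\<bar> \<le> T\<close> \<open>T \<le> T^2\<close> by linarith
  ultimately have "D*m*t^2 + E*m*\<bar>t\<bar> \<le> D*m*T^2 + E*m*T^2"
    using \<open>0 < m\<close> assms(2,3) by (intro add_mono mult_left_mono) simp_all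
  also have "\<dots> = m * ((D + E) * T^2)"
    by (simp add: algebra_simps)
  also have "\<dots> < m * m"
    using \<open>0 < m\<close> assms(5) by simp
  finally show False
    using assms(1) by (simp add: power2_eq_square)
qed

text \<open>At u = 3/2 the discriminant is the square 4 (15/4)^2. With u = 3/2 + 1/t it becomes
  4 Q(t) / t^4 for the quartic Q of E3_quartic_point, and the cubic that
  quartic_point_of_cubic_point attaches to Q, rescaled by m = 2X/15 and Z = 4Y/15, is E3.\<close>

abbreviation E3 :: "rat \<Rightarrow> rat" where
  "E3 \<equiv> weier 781 202824 17740944"

lemma E3_unbounded: "\<exists>x y. y^2 = E3 x \<and> M < x"
proof -
  define h :: "rat \<Rightarrow> rat" where "h x = (x + 457/2)^2 + 10175/4" for x
  have "(31473/64)^2 = E3 (-3663/16)"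
    by (simp add: weier_def power_divide)
  moreover have "two_adic_pole 2 (-3663/16)"
    unfolding two_adic_pole_def by (intro exI[of _ "-3663"] exI[of _ 1]) simp
  moreover have "E3 x = (x - (-324)) * h x" for x
    unfolding weier_def h_def by (simp add: power2_eq_square power3_eq_cube algebra_simps)
  moreover have "1 \<le> h x" for x
    unfolding h_def using zero_le_power2[of "x + 457/2"] by linarith
  ultimately show ?thesis
    using weier_points_unbounded_of_root[of "31473/64" 781 202824 17740944 "-3663/16" 2 "-324" h M]
    by simp
qed

lemma E3_quartic_point:
  assumes "Y^2 = E3 X" and "15 \<le> T" and "8820 * T^2 < X"
  shows "\<exists>t w. T \<le> \<bar>t\<bar> \<and> w^2 = (15/4*t^2 + 22*t - 99/5)^2 + 5616/5*t - 7776/25"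
proof -
  define m Z where "m = 2*X/15" and "Z = 4*Y/15"
  define d \<alpha> \<beta> \<gamma> \<delta> :: rat where "d = 15/4" and "\<alpha> = 22" and "\<beta> = -99/5"
    and "\<gamma> = 5616/5" and "\<delta> = -7776/25"
  define t where "t = (Z - 2*\<alpha>*m - \<gamma>) / (4*d*m)"
  have "0 \<le> T^2"
    by simp
  then have "1176 * T^2 < m"
    unfolding m_def using assms(3) by simp
  moreover have "1 \<le> 1176 * T^2"
    using mult_mono[OF assms(2) assms(2)] assms(2) by (simp add: power2_eq_square)
  ultimately have "1 \<le> m"
    by linarith
  have cubic: "Z^2 = 8*d*m^3 + (4*\<alpha>^2 - 16*d*\<beta>)*m^2 + (4*\<alpha>*\<gamma> - 8*d*\<delta>)*m + \<gamma>^2"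
    using assms(1) unfolding m_def Z_def d_def \<alpha>_def \<beta>_def \<gamma>_def \<delta>_def weier_def
    by (simp add: power2_eq_square power3_eq_cube algebra_simps)
  have "m \<noteq> 0" and "d \<noteq> 0"
    using \<open>1 \<le> m\<close> unfolding d_def by auto
  note quartic = quartic_point_of_cubic_point[OF cubic this, folded t_def]
  have "m^2 \<le> 2*d*m*t^2 + (2*\<alpha>*m + \<gamma>)*t"
    using quartic(1) \<open>1 \<le> m\<close> unfolding \<beta>_def \<delta>_def by simp
  also have "(2*\<alpha>*m + \<gamma>)*t \<le> \<bar>2*\<alpha>*m + \<gamma>\<bar> * \<bar>t\<bar>"
    by (metis abs_ge_self abs_mult)
  also have "\<bar>2*\<alpha>*m + \<gamma>\<bar> \<le> 1168*m"
    using \<open>1 \<le> m\<close> unfolding \<alpha>_def \<gamma>_def by simp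
  then have "\<bar>2*\<alpha>*m + \<gamma>\<bar> * \<bar>t\<bar> \<le> 1168*m*\<bar>t\<bar>"
    by (simp add: mult_right_mono)
  finally have quadratic_bound: "m^2 \<le> (15/2)*m*t^2 + 1168*m*\<bar>t\<bar>"
    unfolding d_def by simp
  have "(15/2 + 1168) * T^2 < m"
    using \<open>0 \<le> T^2\<close> \<open>1176 * T^2 < m\<close> by (simp only: distrib_right)
  then have "T \<le> \<bar>t\<bar>"
    using abs_ge_of_quadratic_bound[OF quadratic_bound] assms(2) by simp
  then show ?thesis
    using quartic(2) unfolding d_def \<alpha>_def \<beta>_def \<gamma>_def \<delta>_def
    by (intro exI[of _ t] exI[of _ "m - (15/4*t^2 + 22*t - 99/5)"]) simp
qed

lemma E3_point_pair:
  assumes "Y^2 = E3 X" and "15 \<le> T" and "8820 * T^2 < X"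
  shows "\<exists>(r, s) \<in> charge_multiple_pairs 3. T \<le> 2 * of_int s"
proof -
  obtain t w where "T \<le> \<bar>t\<bar>" and quartic: "w^2 = (15/4*t^2 + 22*t - 99/5)^2 + 5616/5*t - 7776/25"
    using E3_quartic_point[OF assms] by blast
  then have "15 \<le> \<bar>t\<bar>" and "t \<noteq> 0"
    using assms(2) by auto
  define u where "u = 3/2 + 1/t"
  have "(2 * w / t^2)^2 = 4 * ((15/4*t^2 + 22*t - 99/5)^2 + 5616/5*t - 7776/25) / t^4"
    unfolding quartic[symmetric] power_divide power_mult_distrib by (simp flip: power_mult)
  also have "\<dots> = (6*3*u^2 - 13*(3 - 1)*u + 6*3)^2 - 144*u^2"
    unfolding u_def using \<open>t \<noteq> 0\<close> by (simp add: field_simps power2_eq_square power3_eq_cube power4_eq_xxxx)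
  finally have disc: "(2 * w / t^2)^2 = (6*3*u^2 - 13*(3 - 1)*u + 6*3)^2 - 144*u^2" .
  have "\<bar>1/t\<bar> \<le> 1/15"
    using \<open>15 \<le> \<bar>t\<bar>\<close> by (simp add: abs_divide divide_le_eq)
  then have "1/t \<le> 1/15 \<and> - (1/t) \<le> 1/15"
    by (simp only: abs_le_iff)
  then have "10/7 < u" and "u < 5/3"
    unfolding u_def by linarith+
  then have "10/7 + 1/(10/7) < u + 1/u" and "u + 1/u < 5/3 + 1/(5/3)"
    by (simp_all only: sum_inverse_strict_mono)
  obtain r s where qu: "quotient_of u = (r, s)"
    by (cases "quotient_of u")
  have "(r, s) \<in> charge_multiple_pairs 3"
    by (rule charge_multiple_pairsI[OF qu _ _ _ _ disc])
      (use \<open>10/7 + 1/(10/7) < u + 1/u\<close> \<open>u + 1/u < 5/3 + 1/(5/3)\<close> in simp_all)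
  moreover have "1 \<le> of_int (2 * s) * \<bar>u - of_int 3 / of_int 2\<bar>"
    using quotient_of_dist_fraction[OF qu, of 2 3] \<open>t \<noteq> 0\<close> unfolding u_def by simp
  then have "\<bar>t\<bar> \<le> 2 * of_int s"
    unfolding u_def using \<open>t \<noteq> 0\<close> by (simp add: abs_divide field_simps)
  ultimately show ?thesis
    using \<open>T \<le> \<bar>t\<bar>\<close> by force
qed

lemma infinite_charge_multiple_pairs_3: "infinite (charge_multiple_pairs 3)"
proof (rule infinite_if_snd_unbounded)
  fix N :: int
  define T :: rat where "T = 2 * \<bar>of_int N\<bar> + 15"
  obtain X Y where "Y^2 = E3 X" and "8820 * T^2 < X"
    using E3_unbounded by blast
  then obtain r s where "(r, s) \<in> charge_multiple_pairs 3" and "T \<le> 2 * of_int s"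
    using E3_point_pair[of Y X T] unfolding T_def by fastforce
  moreover have "2 * of_int N < T"
    unfolding T_def by linarith
  ultimately show "\<exists>x \<in> charge_multiple_pairs 3. N < snd x"
    by force
qed

theorem proposition8p3:
  shows "infinite {(r, s). minpair r s \<and> (\<exists>p q. minpair p q \<and> 2 * cmin r s = cmin p q)}
       \<and> infinite {(r, s). minpair r s \<and> (\<exists>p q. minpair p q \<and> 3 * cmin r s = cmin p q)}"
  using infinite_charge_multiple_pairs_2 infinite_charge_multiple_pairs_3
  unfolding charge_multiple_pairs_def by blast

end
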